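(* Let $a<b$ and let $f,g:[a,b]\to\mathbb{R}$ be continuous and differentiable (from the right) at $a$. For $a<x\le b$ write $I_f(a,x)=\frac{1}{x-a}\int_a^x f(t)\,\mathrm{d}t$ and similarly $I_g(a,x)$. If $$\bigl[f(a)\,I_g(a,b)-g(a)\,I_f(a,b)\bigr]\cdot\bigl[f'(a)\,I_g(a,b)-g'(a)\,I_f(a,b)\bigr]> 0,$$ then there exists $\xi\in(a,b)$ such that $$I_g(a,b)\bigl(f(a)-I_f(a,\xi)\bigr)=I_f(a,b)\bigl(g(a)-I_g(a,\xi)\bigr).$$ *)

theory Defs
  imports "HOL-Analysis.Analysis"
begin

definition imean :: "(real \<Rightarrow> real) \<Rightarrow> real \<Rightarrow> real \<Rightarrow> real" where
  "imean f a x = integral {a..x} f / (x - a)"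

end

theory Submission imports Defs begin

text \<open>Put \<open>p = I\<^sub>g(a,b) f - I\<^sub>f(a,b) g\<close>. Linearity of the integral mean turns the claim into
  \<open>I\<^sub>p(a,\<xi>) = p(a)\<close>, and \<open>I\<^sub>p(a,b) = 0\<close>. The hypothesis says that \<open>p(a)\<close> and \<open>p'(a)\<close> have
  the same sign, say positive. Then \<open>p\<close> grows at least linearly just to the right of \<open>a\<close>, so
  \<open>I\<^sub>p(a,x) > p(a)\<close> for \<open>x\<close> close to \<open>a\<close>, while \<open>I\<^sub>p(a,b) = 0 < p(a)\<close>; the intermediate value
  theorem for the continuous function \<open>x \<mapsto> I\<^sub>p(a,x)\<close> on \<open>(a,b]\<close> yields \<open>\<xi>\<close>.\<close>

lemma imean_diff_scaled:
  assumes "continuous_on {a..x} f" and "continuous_on {a..x} g"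
  shows "imean (\<lambda>t. c * f t - d * g t) a x = c * imean f a x - d * imean g a x"
proof -
  have "f integrable_on {a..x}" "g integrable_on {a..x}"
    using assms integrable_continuous_real by blast+
  then have "integral {a..x} (\<lambda>t. c * f t - d * g t) = c * integral {a..x} f - d * integral {a..x} g"
    by (subst integral_diff) (auto intro: integrable_on_mult_right)
  then show ?thesis
    unfolding imean_def by (simp add: diff_divide_distrib)
qed

lemma imean_minus: "imean (\<lambda>t. - p t) a x = - imean p a x"
  unfolding imean_def by simp

lemma continuous_on_imean:
  assumes "continuous_on {a..b} p"
  shows "continuous_on {a<..b} (imean p a)"
proof -
  have "continuous_on {a..b} (\<lambda>x. integral {a..x} p)"
    using assms by (intro indefinite_integral_continuous_1 integrable_continuous_real)
  then have "continuous_on {a<..b} (\<lambda>x. integral {a..x} p)"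
    by (rule continuous_on_subset) auto
  then show ?thesis
    unfolding imean_def by (intro continuous_intros) auto
qed

lemma eventually_imean_gt_at_right:
  assumes "a < b" and "continuous_on {a..b} p"
    and "(p has_real_derivative D) (at_right a)" and "D > 0"
  shows "eventually (\<lambda>x. p a < imean p a x) (at_right a)"
proof -
  have "((\<lambda>y. (p y - p a) / (y - a)) \<longlongrightarrow> D) (at_right a)"
    using assms(3) by (simp add: has_field_derivative_iff)
  then have "eventually (\<lambda>y. D/2 < (p y - p a) / (y - a)) (at_right a)"
    using \<open>D > 0\<close> by (intro order_tendstoD) auto
  then obtain e where "e > a"
    and slope: "\<And>y. a < y \<Longrightarrow> y < e \<Longrightarrow> D/2 < (p y - p a) / (y - a)"
    unfolding eventually_at_right_field by auto
  have "p a < imean p a x" if x: "a < x" "x < min e b" for x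
  proof -
    have "p integrable_on {a..x}"
      using x by (intro integrable_continuous_real continuous_on_subset[OF assms(2)]) auto
    have below: "p a + D/2 * (t - a) \<le> p t" if "t \<in> {a..x}" for t
    proof (cases "t = a")
      case False
      with that x have "a < t" "t < e" by auto
      with slope[OF this] show ?thesis by (simp add: field_simps)
    qed simp
    define F where "F t = p a * t + D/4 * (t - a)^2" for t
    have "((\<lambda>t. p a + D/2 * (t - a)) has_integral (F x - F a)) {a..x}"
      using \<open>a < x\<close> unfolding F_def
      by (intro fundamental_theorem_of_calculus)
        (auto intro!: derivative_eq_intros
          simp: has_real_derivative_iff_has_vector_derivative[symmetric] field_simps)
    moreover have "F x - F a = p a * (x - a) + D/4 * (x - a)^2"
      unfolding F_def by (simp add: algebra_simps)
    ultimately have "((\<lambda>t. p a + D/2 * (t - a)) has_integral (p a * (x - a) + D/4 * (x - a)^2)) {a..x}"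
      by simp
    then have "p a * (x - a) + D/4 * (x - a)^2 \<le> integral {a..x} p"
      using below by (intro has_integral_le[OF _ integrable_integral[OF \<open>p integrable_on {a..x}\<close>]]) auto
    moreover have "0 < D/4 * (x - a)^2"
      using \<open>D > 0\<close> x by simp
    ultimately show ?thesis
      using x unfolding imean_def by (simp add: field_simps)
  qed
  moreover have "min e b > a"
    using \<open>e > a\<close> \<open>a < b\<close> by simp
  ultimately show ?thesis
    unfolding eventually_at_right_field by blast
qed

lemma imean_attains_value_pos:
  assumes "a < b" and "continuous_on {a..b} p"
    and "(p has_real_derivative D) (at_right a)" and "D > 0"
    and "p a > 0" and "imean p a b = 0"
  shows "\<exists>\<xi>. a < \<xi> \<and> \<xi> < b \<and> imean p a \<xi> = p a"
proof -
  have "eventually (\<lambda>x. x < b) (at_right a)"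
    using \<open>a < b\<close> unfolding eventually_at_right_field by blast
  with eventually_imean_gt_at_right[OF assms(1-4)]
  have "eventually (\<lambda>x. p a < imean p a x \<and> x < b) (at_right a)"
    by (rule eventually_conj)
  then obtain x0 where x0: "a < x0" "x0 < b" "p a < imean p a x0"
    unfolding eventually_at_right_field by (metis dense)
  have "continuous_on {x0..b} (imean p a)"
    using continuous_on_imean[OF assms(2)] by (rule continuous_on_subset) (use x0 in auto)
  then obtain \<xi> where "x0 \<le> \<xi>" "\<xi> \<le> b" "imean p a \<xi> = p a"
    using IVT2'[of "imean p a" b "p a" x0] x0 assms(5,6) by auto
  moreover have "\<xi> \<noteq> b"
    using calculation assms(5,6) by auto
  ultimately show ?thesis
    using x0 by (intro exI[of _ \<xi>]) auto
qed

lemma imean_attains_value: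
  assumes "a < b" and "continuous_on {a..b} p"
    and "(p has_real_derivative D) (at_right a)"
    and "p a * D > 0" and "imean p a b = 0"
  shows "\<exists>\<xi>. a < \<xi> \<and> \<xi> < b \<and> imean p a \<xi> = p a"
proof (cases "D > 0")
  case True
  with assms(4) have "p a > 0"
    by (simp add: zero_less_mult_iff)
  with True show ?thesis
    using imean_attains_value_pos assms by blast
next
  case False
  with assms(4) have "- D > 0" "- p a > 0"
    by (auto simp: zero_less_mult_iff)
  moreover have "continuous_on {a..b} (\<lambda>t. - p t)"
    using assms(2) by (intro continuous_intros)
  moreover have "((\<lambda>t. - p t) has_real_derivative - D) (at_right a)"
    using assms(3) by (rule DERIV_minus)
  ultimately show ?thesis
    using imean_attains_value_pos[of a b "\<lambda>t. - p t" "- D"] assms(1,5)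
    by (simp add: imean_minus)
qed

theorem mainTheorem11:
  fixes f g :: "real \<Rightarrow> real" and a b f' g' :: real
  assumes "a < b"
    and "continuous_on {a..b} f" and "continuous_on {a..b} g"
    and "(f has_real_derivative f') (at_right a)"
    and "(g has_real_derivative g') (at_right a)"
    and "(f a * imean g a b - g a * imean f a b) * (f' * imean g a b - g' * imean f a b) > 0"
  shows "\<exists>\<xi>. a < \<xi> \<and> \<xi> < b \<and>
           imean g a b * (f a - imean f a \<xi>) = imean f a b * (g a - imean g a \<xi>)"
proof -
  define p where "p t = imean g a b * f t - imean f a b * g t" for t
  have mean_p: "imean p a x = imean g a b * imean f a x - imean f a b * imean g a x"
    if "x \<le> b" for x
    unfolding p_def using that
    by (intro imean_diff_scaled continuous_on_subset[OF assms(2)] continuous_on_subset[OF assms(3)]) auto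
  have "continuous_on {a..b} p"
    unfolding p_def using assms(2,3) by (intro continuous_intros)
  moreover have "(p has_real_derivative imean g a b * f' - imean f a b * g') (at_right a)"
    unfolding p_def using assms(4,5) by (auto intro!: derivative_eq_intros)
  moreover have "p a * (imean g a b * f' - imean f a b * g') > 0"
    using assms(6) unfolding p_def by (simp add: algebra_simps)
  moreover have "imean p a b = 0"
    using mean_p[of b] by simp
  ultimately obtain \<xi> where "a < \<xi>" "\<xi> < b" "imean p a \<xi> = p a"
    using imean_attains_value assms(1) by blast
  then show ?thesis
    using mean_p[of \<xi>] unfolding p_def by (auto simp: algebra_simps)
qed

end
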